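(* Let $a=\{a_1,\dots,a_m\}\subseteq\mathbb{Z}_{\ge 2}$ and $n\ge 0$. Then $\chi_{\mathcal{A}_n(a)}(t)=\chi_{\widetilde{\mathcal{C}}_n}(t-1)$.
   Context: For a set $a=\{a_1,\dots,a_m\}$ of integers $\ge2$ and $n\ge 1$, $\mathcal{A}_n(a)$ denotes the hyperplane arrangement in $\mathbb{R}^n$ consisting of the hyperplanes $x_i=0$ ($1\le i\le n$), $x_i=x_j$ ($1\le i<j\le n$), and $x_i=a_rx_j$ ($1\le i\neq j\le n$, $1\le r\le m$). $\widetilde{\mathcal{C}}_n$ denotes the arrangement in $\mathbb{R}^n$ consisting of the hyperplanes $x_i-x_j=0$ ($1\le i<j\le n$) and $x_i-x_j=\log a_r/\log a_1$ ($1\le i\neq j\le n$, $1\le r\le m$; for $r=1$ this is $x_i-x_j=1$). For $n=0$ both are empty arrangements in $\mathbb{R}^0$ with characteristic polynomial $1$. For a finite arrangement $\mathcal{A}$ of affine hyperplanes in $\mathbb{R}^n$, the characteristic polynomial is $\chi_{\mathcal{A}}(t)=\sum_{\mathcal{B}}(-1)^{\#\mathcal{B}}t^{n-\operatorname{rank}(\mathcal{B})}$, the sum over subsets $\mathcal{B}\subseteq\mathcal{A}$ whose hyperplanes have nonempty common intersection, where $\operatorname{rank}(\mathcal{B})$ is the dimension of the span of the normal vectors of the hyperplanes in $\mathcal{B}$. *)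

theory Defs
  imports "HOL-Analysis.Analysis" "HOL-Computational_Algebra.Polynomial" "HOL-Library.Function_Algebras"
begin

text \<open>An affine hyperplane in R^n is given by a pair (w, c) of a (nonzero) normal
  vector w and a constant c; it is the set of x with sum of w i * x i over i < n equal to c.
  Vectors in R^n are functions nat => real, only coordinates i < n being relevant.\<close>

type_synonym hyperplane = "(nat \<Rightarrow> real) \<times> real"

definition hyp_set :: "nat \<Rightarrow> hyperplane \<Rightarrow> (nat \<Rightarrow> real) set" where
  "hyp_set n H = {x. (\<Sum>i<n. fst H i * x i) = snd H}"

definition arr_rank :: "hyperplane set \<Rightarrow> nat" where
  "arr_rank B = vector_space.dim (\<lambda>(c::real) (v::nat \<Rightarrow> real) i. c * v i) (fst ` B)"

definition char_poly :: "nat \<Rightarrow> hyperplane set \<Rightarrow> real poly" where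
  "char_poly n A =
     (\<Sum>B \<in> {B. B \<subseteq> A \<and> (\<Inter>H\<in>B. hyp_set n H) \<noteq> {}}.
        smult ((-1) ^ card B) (monom 1 (n - arr_rank B)))"

definition unitv :: "nat \<Rightarrow> nat \<Rightarrow> real" where
  "unitv i = (\<lambda>k. if k = i then 1 else 0)"

definition arrA :: "nat \<Rightarrow> int set \<Rightarrow> hyperplane set" where
  "arrA n a =
     {(unitv i, 0) | i. i < n}
   \<union> {((\<lambda>k. unitv i k - unitv j k), 0) | i j. i < j \<and> j < n}
   \<union> {((\<lambda>k. unitv i k - of_int r * unitv j k), 0) | i j r. i < n \<and> j < n \<and> i \<noteq> j \<and> r \<in> a}"

definition arrC :: "nat \<Rightarrow> int set \<Rightarrow> int \<Rightarrow> hyperplane set" where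
  "arrC n a a1 =
     {((\<lambda>k. unitv i k - unitv j k), 0) | i j. i < j \<and> j < n}
   \<union> {((\<lambda>k. unitv i k - unitv j k), ln (of_int r) / ln (of_int a1)) | i j r.
         i < n \<and> j < n \<and> i \<noteq> j \<and> r \<in> a}"

end

theory Submission
  imports Defs
begin

text \<open>Both characteristic polynomials are expanded over subsets \<open>J\<close> of the common index set of the
  non-coordinate hyperplanes. For \<open>\<A>\<^sub>n(a)\<close> the coordinate hyperplanes add an inner alternating sum
  over subsets \<open>S\<close> of the coordinates. If the affine system of \<open>J\<close> in \<open>C\<^sub>n\<close> is inconsistent, some
  coordinate vector \<open>e\<^sub>k\<close> lies in the span of the normals \<open>e\<^sub>i - r e\<^sub>j\<close> of \<open>J\<close> (otherwise a nowhere
  vanishing solution of \<open>x\<^sub>i = r x\<^sub>j\<close> would exist, and its logarithm would solve the affine system),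
  so the inner sum cancels in pairs \<open>S, S \<union> {k}\<close>. If it is consistent, with solution \<open>y\<close>, the
  rescaling \<open>x\<^sub>t \<mapsto> a\<^sub>1\<^bsup>y\<^sub>t\<^esup> x\<^sub>t\<close> turns these normals into multiples of the normals \<open>e\<^sub>i - e\<^sub>j\<close> of \<open>C\<^sub>n\<close>,
  the edge vectors of a graph on the coordinates. Adding \<open>e\<^sub>S\<close> raises the rank by the number of
  components met by \<open>S\<close>, and the inner sum collapses to \<open>(t - 1)\<^sup>c\<close> with \<open>c\<close> the number of components,
  which is \<open>n\<close> minus the rank of \<open>J\<close> in \<open>C\<^sub>n\<close>.\<close>

section \<open>Linear algebra on real sequences\<close>

interpretation fv: vector_space "\<lambda>(c::real) (v::nat \<Rightarrow> real) i. c * v i"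
  by unfold_locales (auto simp: algebra_simps fun_eq_iff)

interpretation fv_real: vector_space_pair "\<lambda>(c::real) (v::nat \<Rightarrow> real) i. c * v i" "(*) :: real \<Rightarrow> _"
  by (rule vector_space_pair.intro[OF fv.vector_space_axioms]) (unfold_locales; simp add: algebra_simps)

lemma fv_dim_insert:
  assumes "finite X"
  shows "fv.dim (insert x X) = (if x \<in> fv.span X then fv.dim X else Suc (fv.dim X))"
proof (cases "x \<in> fv.span X")
  case True
  then show ?thesis by (metis fv.dim_span fv.span_redundant)
next
  case False
  obtain B where B: "B \<subseteq> X" "fv.independent B" "X \<subseteq> fv.span B" "card B = fv.dim X"
    by (metis fv.basis_exists)
  have "x \<notin> fv.span B"
    using False fv.span_mono[OF B(1)] by blast
  then have "fv.independent (insert x B)" "x \<notin> B"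
    using fv.independent_insertI[OF _ B(2)] fv.span_superset[of B] by auto
  moreover have "insert x X \<subseteq> fv.span (insert x B)"
    using B(3) fv.span_mono[of B "insert x B"] fv.span_superset[of "insert x B"] by blast
  ultimately have "fv.dim (insert x X) = card (insert x B)"
    using B(1) by (intro fv.dim_unique) auto
  also have "\<dots> = Suc (card B)"
    using \<open>x \<notin> B\<close> B(1) assms by (simp add: finite_subset)
  finally show ?thesis
    using False B(4) by simp
qed

lemma fv_dim_image_inj:
  assumes "Vector_Spaces.linear (\<lambda>c v i. c * v i) (\<lambda>c v i. c * v i) f" "inj f"
  shows "fv.dim (f ` X) = fv.dim (X :: (nat \<Rightarrow> real) set)"
proof -
  interpret f: Vector_Spaces.linear "\<lambda>(c::real) (v::nat \<Rightarrow> real) i. c * v i" "\<lambda>(c::real) (v::nat \<Rightarrow> real) i. c * v i" f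
    by fact
  obtain B where B: "B \<subseteq> X" "fv.independent B" "X \<subseteq> fv.span B" "card B = fv.dim X"
    by (metis fv.basis_exists)
  have "fv.independent (f ` B)"
    using f.independent_injective_image[OF B(2)] inj_on_subset[OF assms(2)] by blast
  moreover have "f ` X \<subseteq> fv.span (f ` B)"
    using B(3) f.span_image by blast
  moreover have "card (f ` B) = card B"
    using card_image inj_on_subset[OF assms(2)] by blast
  ultimately show ?thesis
    using B(1,4) by (intro fv.dim_unique) auto
qed

lemma fv_span_eq_mutual_multiples:
  assumes "\<And>v. v \<in> X \<Longrightarrow> \<exists>c. \<exists>w\<in>Y. v = (\<lambda>t. c * w t)"
    and "\<And>w. w \<in> Y \<Longrightarrow> \<exists>c. \<exists>v\<in>X. w = (\<lambda>t. c * v t)"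
  shows "fv.span X = fv.span Y"
proof -
  have "A \<subseteq> fv.span B" if "\<And>v. v \<in> A \<Longrightarrow> \<exists>c. \<exists>w\<in>B. v = (\<lambda>t. c * w t)" for A B
    using that fv.span_scale[OF fv.span_base] by blast
  then show ?thesis
    using assms by (simp add: fv.span_eq)
qed

lemma unitv_apply: "unitv i k = (if k = i then 1 else 0)"
  by (simp add: unitv_def)

lemma fv_dim_unitv_image:
  assumes "finite S"
  shows "fv.dim (unitv ` S) = card S"
  using assms
proof (induction S rule: finite_induct)
  case (insert k S)
  have "fv.subspace {v. v k = 0}"
    by (auto simp: fv.subspace_def)
  then have "fv.span (unitv ` S) \<subseteq> {v. v k = 0}"
    using insert.hyps(2) by (intro fv.span_minimal) (auto simp: unitv_apply)
  then have "unitv k \<notin> fv.span (unitv ` S)"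
    by (auto simp: unitv_apply)
  then show ?case
    using insert by (simp add: fv_dim_insert)
qed (use fv.dim_eq_card_independent[OF fv.independent_empty] in \<open>metis image_empty card.empty\<close>)

lemma fv_linear_functional_exists:
  assumes "k \<notin> fv.span X"
  obtains \<phi> where "Vector_Spaces.linear (\<lambda>c v i. c * v i) (*) \<phi>" "\<phi> k = 1" "\<And>v. v \<in> X \<Longrightarrow> \<phi> v = 0"
proof -
  obtain B where B: "B \<subseteq> X" "fv.independent B" "X \<subseteq> fv.span B"
    by (metis fv.basis_exists)
  have "k \<notin> fv.span B"
    using assms fv.span_mono[OF B(1)] by blast
  then have ind: "fv.independent (insert k B)" and "k \<notin> B"
    using fv.independent_insertI[OF _ B(2)] fv.span_superset[of B] by auto
  obtain \<phi> where lin: "Vector_Spaces.linear (\<lambda>c v i. c * v i) (*) \<phi>"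
      and val: "\<forall>v\<in>insert k B. \<phi> v = (if v = k then 1 else 0)"
    using fv_real.linear_independent_extend[OF ind, of "\<lambda>v. if v = k then 1 else 0"] by blast
  interpret \<phi>: Vector_Spaces.linear "\<lambda>(c::real) (v::nat \<Rightarrow> real) i. c * v i" "(*) :: real \<Rightarrow> _" \<phi>
    by (fact lin)
  have "\<phi> b = 0" if "b \<in> B" for b
    using val that \<open>k \<notin> B\<close> by auto
  then have "\<phi> v = 0" if "v \<in> X" for v
    using \<phi>.eq_0_on_span B(3) that by blast
  then show thesis
    using that lin val by simp
qed

lemma fv_subspace_nowhere_zero:
  assumes V: "fv.subspace V" and nz: "\<And>k. k < n \<Longrightarrow> \<exists>x\<in>V. x k \<noteq> 0"
  shows "\<exists>x\<in>V. \<forall>k<n. x k \<noteq> 0"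
proof -
  have "\<exists>x\<in>V. \<forall>k<m. x k \<noteq> 0" if "m \<le> n" for m
    using that
  proof (induction m)
    case 0
    then show ?case using fv.subspace_0[OF V] by blast
  next
    case (Suc m)
    obtain x where x: "x \<in> V" "\<forall>k<m. x k \<noteq> 0" using Suc by auto
    obtain z where z: "z \<in> V" "z m \<noteq> 0" using nz[of m] Suc.prems by (meson Suc_le_lessD)
    \<comment> \<open>a generic combination \<open>x + s z\<close> avoids the finitely many bad values of \<open>s\<close>\<close>
    obtain s :: real where s: "s \<notin> (\<lambda>k. - x k / z k) ` {..<Suc m}"
      using ex_new_if_finite[OF infinite_UNIV_char_0, of "(\<lambda>k. - x k / z k) ` {..<Suc m}"] by blast
    have "x + (\<lambda>i. s * z i) \<in> V"
      using V x(1) z(1) by (simp add: fv.subspace_add fv.subspace_scale)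
    moreover have "x k + s * z k \<noteq> 0" if "k < Suc m" for k
    proof
      assume 0: "x k + s * z k = 0"
      show False
      proof (cases "z k = 0")
        case True
        then show False using 0 x(2) z(2) that less_Suc_eq by auto
      next
        case False
        then have "s = - x k / z k" using 0 by (simp add: field_simps)
        then show False using s that by auto
      qed
    qed
    ultimately show ?case by (intro bexI[of _ "x + (\<lambda>i. s * z i)"]) auto
  qed
  then show ?thesis by simp
qed

section \<open>Alternating sums over subsets\<close>

lemma sum_Pow_insert:
  assumes "finite A" "k \<notin> A"
  shows "(\<Sum>S\<in>Pow (insert k A). f S) = (\<Sum>S\<in>Pow A. f S + f (insert k S))"
proof -
  have "inj_on (insert k) (Pow A)"
    using assms(2) by (intro inj_onI) (metis PowD insert_ident subsetD)
  moreover have "Pow A \<inter> insert k ` Pow A = {}"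
    using assms(2) by auto
  ultimately show ?thesis
    using assms(1) by (simp add: Pow_insert sum.union_disjoint sum.reindex sum.distrib)
qed

lemma sum_Pow_Un_disjoint:
  assumes "finite A" "finite B" "A \<inter> B = {}"
  shows "(\<Sum>C\<in>Pow (A \<union> B). f C) = (\<Sum>X\<in>Pow A. \<Sum>Y\<in>Pow B. f (X \<union> Y))"
proof -
  have "Pow (A \<union> B) = (\<lambda>(X, Y). X \<union> Y) ` (Pow A \<times> Pow B)"
  proof (intro equalityI subsetI)
    fix C assume "C \<in> Pow (A \<union> B)"
    then have "C = (\<lambda>(X, Y). X \<union> Y) (C \<inter> A, C \<inter> B)" by auto
    then show "C \<in> (\<lambda>(X, Y). X \<union> Y) ` (Pow A \<times> Pow B)" by (rule image_eqI) auto
  qed auto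
  moreover have "inj_on (\<lambda>(X, Y). X \<union> Y) (Pow A \<times> Pow B)"
  proof (rule inj_onI, clarsimp)
    fix X Y X' Y' assume "X \<subseteq> A" "Y \<subseteq> B" "X' \<subseteq> A" "Y' \<subseteq> B" "X \<union> Y = X' \<union> Y'"
    then have "X = (X' \<union> Y') \<inter> A" "X' = (X' \<union> Y') \<inter> A" "Y = (X' \<union> Y') \<inter> B" "Y' = (X' \<union> Y') \<inter> B"
      using assms(3) by auto
    then show "X = X' \<and> Y = Y'" by simp
  qed
  ultimately show ?thesis
    by (simp add: sum.reindex sum.cartesian_product split_def)
qed

lemma sum_Pow_image:
  assumes "inj_on f A"
  shows "(\<Sum>X\<in>Pow (f ` A). h X) = (\<Sum>S\<in>Pow A. h (f ` S))"
  using sum.reindex[OF inj_on_image_Pow[OF assms], of h]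
  by (simp add: image_Pow_surj comp_def)

lemma sum_Pow_insert_sign:
  fixes g :: "'a set \<Rightarrow> 'b::comm_ring_1"
  assumes "finite A" "k \<notin> A"
  shows "(\<Sum>S\<in>Pow (insert k A). (-1) ^ card S * g S)
       = (\<Sum>S\<in>Pow A. (-1) ^ card S * (g S - g (insert k S)))"
  unfolding sum_Pow_insert[OF assms]
proof (rule sum.cong[OF refl])
  fix S assume "S \<in> Pow A"
  then have "card (insert k S) = Suc (card S)"
    using assms finite_subset by (subst card_insert_disjoint) auto
  then show "(-1) ^ card S * g S + (-1) ^ card (insert k S) * g (insert k S)
      = (-1) ^ card S * (g S - g (insert k S))"
    by (simp add: algebra_simps)
qed

lemma sum_Pow_sign_cancel:
  fixes g :: "'a set \<Rightarrow> 'b::comm_ring_1"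
  assumes "finite A" "k \<in> A" "\<And>S. S \<subseteq> A \<Longrightarrow> g (insert k S) = g S"
  shows "(\<Sum>S\<in>Pow A. (-1) ^ card S * g S) = 0"
proof -
  have "A = insert k (A - {k})"
    using assms(2) by blast
  then have "(\<Sum>S\<in>Pow A. (-1) ^ card S * g S)
      = (\<Sum>S\<in>Pow (A - {k}). (-1) ^ card S * (g S - g (insert k S)))"
    using sum_Pow_insert_sign[of "A - {k}" k g] assms(1) by simp
  also have "\<dots> = 0"
  proof (intro sum.neutral ballI)
    fix S assume "S \<in> Pow (A - {k})"
    then have "S \<subseteq> A" by blast
    then show "(-1) ^ card S * (g S - g (insert k S)) = 0"
      using assms(3) by simp
  qed
  finally show ?thesis .
qed

lemma sum_Pow_sign_power_card_image:
  fixes x :: "'b::comm_ring_1" and f :: "'a \<Rightarrow> 'c"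
  assumes "finite U"
  shows "(\<Sum>S\<in>Pow U. (-1) ^ card S * x ^ (card (f ` U) - card (f ` S))) = (x - 1) ^ card (f ` U)"
  using assms
proof (induction U rule: finite_induct)
  case (insert k U)
  define c where "c = card (f ` insert k U)"
  have "(\<Sum>S\<in>Pow (insert k U). (-1) ^ card S * x ^ (c - card (f ` S)))
      = (\<Sum>S\<in>Pow U. (-1) ^ card S * (x ^ (c - card (f ` S)) - x ^ (c - card (f ` insert k S))))"
    using insert.hyps by (rule sum_Pow_insert_sign)
  also have "\<dots> = (x - 1) ^ c"
  proof (cases "f k \<in> f ` U")
    case True
    then obtain l where l: "l \<in> U" "f l = f k" by auto
    have c: "c = card (f ` U)"
      using True by (simp add: c_def insert_absorb)
    have "(\<Sum>S\<in>Pow U. (-1) ^ card S * x ^ (c - card (f ` insert k S))) = 0"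
    proof (rule sum_Pow_sign_cancel[OF insert.hyps(1) l(1)])
      fix S
      have "f ` insert k (insert l S) = f ` insert k S" using l(2) by auto
      then show "x ^ (c - card (f ` insert k (insert l S))) = x ^ (c - card (f ` insert k S))"
        by simp
    qed
    then show ?thesis
      using insert.IH by (simp add: c right_diff_distrib sum_subtractf)
  next
    case False
    have "(-1) ^ card S * (x ^ (c - card (f ` S)) - x ^ (c - card (f ` insert k S)))
        = (-1) ^ card S * x ^ (card (f ` U) - card (f ` S)) * (x - 1)" if "S \<in> Pow U" for S
    proof -
      have "card (f ` S) \<le> card (f ` U)" "f k \<notin> f ` S" "finite (f ` S)"
        using that False insert.hyps(1) by (auto intro: card_mono finite_subset)
      then show ?thesis
        using False insert.hyps(1) by (simp add: c_def Suc_diff_le algebra_simps)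
    qed
    then have "(\<Sum>S\<in>Pow U. (-1) ^ card S * (x ^ (c - card (f ` S)) - x ^ (c - card (f ` insert k S))))
        = (x - 1) ^ card (f ` U) * (x - 1)"
      using insert.IH by (simp add: sum_distrib_right[symmetric])
    then show ?thesis
      using False insert.hyps(1) by (simp add: c_def mult.commute)
  qed
  finally show ?case
    by (simp add: c_def)
qed simp

section \<open>Graphs of coordinate differences\<close>

lemma fv_subspace_sum_eq_0: "fv.subspace {v. (\<Sum>t\<in>C. v t) = 0}"
  unfolding fv.subspace_def by (simp add: sum.distrib sum_distrib_left[symmetric])

lemma sum_unitv: "finite C \<Longrightarrow> (\<Sum>t\<in>C. unitv i t) = (if i \<in> C then 1 else 0)"
  by (simp add: unitv_def)

text \<open>\<open>G\<close> consists of the edge vectors \<open>e\<^sub>i - e\<^sub>j\<close> of a graph on \<open>{..<n}\<close>; \<open>linked\<close> is connectivity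
  in this graph, expressed through the span.\<close>

locale coordinate_differences =
  fixes n :: nat and G :: "(nat \<Rightarrow> real) set"
  assumes finite_G: "finite G"
    and G_unitv_diff: "\<And>g. g \<in> G \<Longrightarrow> \<exists>i<n. \<exists>j<n. g = unitv i - unitv j"
begin

definition linked :: "nat \<Rightarrow> nat \<Rightarrow> bool" where
  "linked k l \<longleftrightarrow> unitv k - unitv l \<in> fv.span G"

definition component :: "nat \<Rightarrow> nat set" where
  "component k = {l. l < n \<and> linked k l}"

lemma linked_refl: "linked k k"
  unfolding linked_def using fv.span_zero by simp

lemma linked_sym: "linked k l \<Longrightarrow> linked l k"
  unfolding linked_def by (metis fv.span_neg minus_diff_eq)

lemma linked_trans:
  assumes "linked k l" "linked l m"
  shows "linked k m"
proof -
  have "unitv k - unitv m = (unitv k - unitv l) + (unitv l - unitv m)"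
    by simp
  then show ?thesis
    using assms fv.span_add unfolding linked_def by metis
qed

lemma component_eq: "linked k l \<Longrightarrow> component k = component l"
  unfolding component_def using linked_sym linked_trans by blast

lemma finite_component: "finite (component k)"
  by (simp add: component_def)

lemma mem_component_self: "k < n \<Longrightarrow> k \<in> component k"
  by (simp add: component_def linked_refl)

lemma sum_component_span:
  assumes "v \<in> fv.span G"
  shows "(\<Sum>t\<in>component k. v t) = 0"
proof -
  note fv_subspace_sum_eq_0
  moreover have "(\<Sum>t\<in>component k. g t) = 0" if g: "g \<in> G" for g
  proof -
    obtain i j where ij: "i < n" "j < n" "g = unitv i - unitv j"
      using G_unitv_diff[OF g] by blast
    then have "linked i j"
      unfolding linked_def using g fv.span_base by blast
    then have "i \<in> component k \<longleftrightarrow> j \<in> component k"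
      using ij linked_sym linked_trans unfolding component_def by blast
    then show ?thesis
      using ij finite_component by (simp add: sum_subtractf sum_unitv)
  qed
  ultimately show ?thesis
    using fv.span_induct[OF assms] by blast
qed

lemma unitv_in_span_iff:
  assumes "k < n" "S \<subseteq> {..<n}"
  shows "unitv k \<in> fv.span (G \<union> unitv ` S) \<longleftrightarrow> (\<exists>l\<in>S. linked k l)"
proof
  assume "\<exists>l\<in>S. linked k l"
  then obtain l where l: "l \<in> S" "unitv k - unitv l \<in> fv.span G"
    unfolding linked_def by blast
  have "unitv k - unitv l \<in> fv.span (G \<union> unitv ` S)"
    using l(2) fv.span_mono[of G "G \<union> unitv ` S"] by blast
  moreover have "unitv l \<in> fv.span (G \<union> unitv ` S)"
    using l(1) by (intro fv.span_base) blast
  ultimately have "(unitv k - unitv l) + unitv l \<in> fv.span (G \<union> unitv ` S)"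
    by (rule fv.span_add)
  then show "unitv k \<in> fv.span (G \<union> unitv ` S)"
    by simp
next
  assume k: "unitv k \<in> fv.span (G \<union> unitv ` S)"
  show "\<exists>l\<in>S. linked k l"
  proof (rule ccontr)
    assume unlinked: "\<not> (\<exists>l\<in>S. linked k l)"
    \<comment> \<open>summing the coordinates over the component of \<open>k\<close> separates \<open>unitv k\<close> from the span\<close>
    note fv_subspace_sum_eq_0
    moreover have "(\<Sum>t\<in>component k. v t) = 0" if v: "v \<in> G \<union> unitv ` S" for v
    proof (cases "v \<in> G")
      case True
      then show ?thesis by (intro sum_component_span fv.span_base)
    next
      case False
      then obtain l where "l \<in> S" "v = unitv l" using v by blast
      moreover have "l \<notin> component k"
        using unlinked \<open>l \<in> S\<close> unfolding component_def by blast
      ultimately show ?thesis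
        using finite_component by (simp add: sum_unitv)
    qed
    ultimately have "(\<Sum>t\<in>component k. unitv k t) = 0"
      using fv.span_induct[OF k] by blast
    then show False
      using mem_component_self[OF assms(1)] finite_component by (simp add: sum_unitv)
  qed
qed

lemma dim_Un_unitv:
  assumes "S \<subseteq> {..<n}"
  shows "fv.dim (G \<union> unitv ` S) = fv.dim G + card (component ` S)"
proof -
  have "finite S"
    using assms finite_subset by blast
  then show ?thesis
    using assms
  proof (induction S rule: finite_induct)
    case (insert k S)
    then have k: "k < n" and S: "S \<subseteq> {..<n}" by auto
    have fin: "finite (G \<union> unitv ` S)"
      using finite_G insert.hyps(1) by blast
    have G_insert: "G \<union> unitv ` insert k S = insert (unitv k) (G \<union> unitv ` S)"
      by auto
    show ?case
    proof (cases "\<exists>l\<in>S. linked k l")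
      case True
      then obtain l where "l \<in> S" "linked k l" by blast
      then have "component ` insert k S = component ` S"
        using component_eq by auto
      moreover have "unitv k \<in> fv.span (G \<union> unitv ` S)"
        using True unitv_in_span_iff[OF k S] by blast
      ultimately show ?thesis
        using insert.IH[OF S] fv_dim_insert[OF fin] G_insert by simp
    next
      case False
      have "component k \<notin> component ` S"
      proof
        assume "component k \<in> component ` S"
        then obtain l where "l \<in> S" "component k = component l" by blast
        then have "linked l k"
          using mem_component_self[OF k] unfolding component_def by blast
        then show False
          using False \<open>l \<in> S\<close> linked_sym by blast
      qed
      then have "card (component ` insert k S) = Suc (card (component ` S))"
        using insert.hyps(1) by simp
      moreover have "unitv k \<notin> fv.span (G \<union> unitv ` S)"
        using False unitv_in_span_iff[OF k S] by blast
      ultimately show ?thesis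
        using insert.IH[OF S] fv_dim_insert[OF fin] G_insert by simp
    qed
  qed simp
qed

lemma dim_add_card_components: "fv.dim G + card (component ` {..<n}) = n"
proof -
  have "G \<subseteq> fv.span (unitv ` {..<n})"
  proof
    fix g assume "g \<in> G"
    then obtain i j where "i < n" "j < n" "g = unitv i - unitv j"
      using G_unitv_diff by blast
    then show "g \<in> fv.span (unitv ` {..<n})"
      by (simp add: fv.span_diff fv.span_base)
  qed
  then have "G \<union> unitv ` {..<n} \<subseteq> fv.span (unitv ` {..<n})"
    using fv.span_superset[of "unitv ` {..<n}"] by blast
  moreover have "unitv ` {..<n} \<subseteq> fv.span (G \<union> unitv ` {..<n})"
    using fv.span_superset[of "G \<union> unitv ` {..<n}"] by blast
  ultimately have "fv.dim (G \<union> unitv ` {..<n}) = fv.dim (unitv ` {..<n})"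
    by (intro fv.span_eq_dim) (simp add: fv.span_eq)
  also have "\<dots> = n"
    by (simp add: fv_dim_unitv_image)
  finally have "fv.dim (G \<union> unitv ` {..<n}) = n" .
  then show ?thesis
    using dim_Un_unitv[of "{..<n}"] by simp
qed

end

section \<open>Indexing the hyperplanes\<close>

text \<open>A triple \<open>(i, j, r)\<close> indexes the hyperplane \<open>x\<^sub>i = r x\<^sub>j\<close> of \<open>\<A>\<^sub>n(a)\<close> and \<open>x\<^sub>i - x\<^sub>j = log r / log a\<^sub>1\<close>
  of \<open>C\<^sub>n\<close>; the triples with \<open>r = 1\<close> give the hyperplanes \<open>x\<^sub>i = x\<^sub>j\<close>, taken once with \<open>i < j\<close>.\<close>

definition hyp_index :: "nat \<Rightarrow> int set \<Rightarrow> (nat \<times> nat \<times> int) set" where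
  "hyp_index n a = {(i, j, 1) | i j. i < j \<and> j < n} \<union> {(i, j, r) | i j r. i < n \<and> j < n \<and> i \<noteq> j \<and> r \<in> a}"

fun normalA :: "nat \<times> nat \<times> int \<Rightarrow> nat \<Rightarrow> real" where
  "normalA (i, j, r) = (\<lambda>k. unitv i k - of_int r * unitv j k)"

fun normalC :: "nat \<times> nat \<times> int \<Rightarrow> nat \<Rightarrow> real" where
  "normalC (i, j, r) = (\<lambda>k. unitv i k - unitv j k)"

fun offsetC :: "int \<Rightarrow> nat \<times> nat \<times> int \<Rightarrow> real" where
  "offsetC a1 (i, j, r) = ln (of_int r) / ln (of_int a1)"

lemma arrA_eq: "arrA n a = (\<lambda>i. (unitv i, 0)) ` {..<n} \<union> (\<lambda>p. (normalA p, 0)) ` hyp_index n a"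
  unfolding arrA_def hyp_index_def image_Un by (simp add: image_Collect Un_assoc lessThan_def)

lemma arrC_eq: "arrC n a a1 = (\<lambda>p. (normalC p, offsetC a1 p)) ` hyp_index n a"
  unfolding arrC_def hyp_index_def image_Un by (simp add: image_Collect)

lemma hyp_index_memD:
  assumes "(i, j, r) \<in> hyp_index n a" "\<forall>r\<in>a. r \<ge> 2"
  shows "i < n" "j < n" "i \<noteq> j" "r \<ge> 1"
  using assms unfolding hyp_index_def by auto

lemma finite_hyp_index: "finite a \<Longrightarrow> finite (hyp_index n a)"
  by (rule finite_subset[of _ "{..<n} \<times> {..<n} \<times> insert 1 a"]) (auto simp: hyp_index_def)

lemma unitv_neq_normalA:
  assumes "p \<in> hyp_index n a" "\<forall>r\<in>a. r \<ge> 2"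
  shows "unitv k \<noteq> normalA p"
proof -
  obtain i j r where p: "p = (i, j, r)" by (cases p)
  then have "i \<noteq> j" "r \<ge> 1"
    using hyp_index_memD assms by blast+
  then have "unitv k j \<noteq> normalA p j"
    by (simp add: p unitv_apply)
  then show ?thesis by metis
qed

lemma inj_on_normalA:
  assumes "\<forall>r\<in>a. r \<ge> 2"
  shows "inj_on normalA (hyp_index n a)"
proof (rule inj_onI)
  fix p q assume p: "p \<in> hyp_index n a" and q: "q \<in> hyp_index n a" and eq: "normalA p = normalA q"
  obtain i j r i' j' r' where pq: "p = (i, j, r)" "q = (i', j', r')"
    by (cases p, cases q)
  have "i \<noteq> j" "r \<ge> 1" "r' \<ge> 1"
    using hyp_index_memD p q assms unfolding pq by blast+
  moreover have ev: "unitv i t - of_int r * unitv j t = unitv i' t - of_int r' * unitv j' t" for t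
    using fun_cong[OF eq, of t] by (simp add: pq)
  ultimately have "i = i'"
    using ev[of i] by (auto simp: unitv_apply split: if_splits)
  then show "p = q"
    using ev[of j] \<open>i \<noteq> j\<close> \<open>r \<ge> 1\<close> by (auto simp: pq unitv_apply split: if_splits)
qed

lemma inj_on_normalC_offsetC:
  assumes "\<forall>r\<in>a. r \<ge> 2" "a1 \<ge> 2"
  shows "inj_on (\<lambda>p. (normalC p, offsetC a1 p)) (hyp_index n a)"
proof (rule inj_onI)
  fix p q assume p: "p \<in> hyp_index n a" and q: "q \<in> hyp_index n a"
    and eq: "(normalC p, offsetC a1 p) = (normalC q, offsetC a1 q)"
  obtain i j r i' j' r' where pq: "p = (i, j, r)" "q = (i', j', r')"
    by (cases p, cases q)
  have "i \<noteq> j" "r \<ge> 1" "i' \<noteq> j'" "r' \<ge> 1"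
    using hyp_index_memD p q assms(1) unfolding pq by blast+
  moreover have ev: "unitv i t - unitv j t = unitv i' t - unitv j' t" for t
    using fun_cong[OF arg_cong[OF eq, of fst], of t] by (simp add: pq)
  ultimately have "i = i'" "j = j'"
    using ev[of i] ev[of j] by (auto simp: unitv_apply split: if_splits)
  moreover have "ln (of_int r) = ln (real_of_int r')"
    using arg_cong[OF eq, of snd] assms(2) by (simp add: pq)
  then have "r = r'"
    using \<open>r \<ge> 1\<close> \<open>r' \<ge> 1\<close> by simp
  ultimately show "p = q"
    by (simp add: pq)
qed

section \<open>The inner sums over coordinate hyperplanes\<close>

definition consistent :: "int \<Rightarrow> (nat \<times> nat \<times> int) set \<Rightarrow> bool" where
  "consistent a1 J \<longleftrightarrow> (\<exists>y :: nat \<Rightarrow> real. \<forall>(i, j, r)\<in>J. y i - y j = ln (of_int r) / ln (of_int a1))"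

lemma sum_unitv_diff_mult:
  "i < n \<Longrightarrow> j < n \<Longrightarrow> (\<Sum>k<n. (unitv i k - unitv j k) * y k) = y i - y j"
  by (simp add: unitv_apply left_diff_distrib sum_subtractf if_distrib[of "\<lambda>x. x * y _"] cong: if_cong)

lemma Inter_arrC_nonempty_iff:
  assumes "\<forall>r\<in>a. r \<ge> 2" "J \<subseteq> hyp_index n a"
  shows "(\<Inter>p\<in>J. hyp_set n (normalC p, offsetC a1 p)) \<noteq> {} \<longleftrightarrow> consistent a1 J"
proof -
  have "y \<in> hyp_set n (normalC p, offsetC a1 p) \<longleftrightarrow> (case p of (i, j, r) \<Rightarrow> y i - y j = ln (of_int r) / ln (of_int a1))"
    if "p \<in> J" for p y
  proof -
    obtain i j r where p: "p = (i, j, r)" by (cases p)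
    then have "i < n" "j < n"
      using hyp_index_memD[of i j r n a] that assms p by auto
    then show ?thesis
      by (simp add: p hyp_set_def sum_unitv_diff_mult)
  qed
  then show ?thesis
    unfolding consistent_def by blast
qed

lemma consistent_obtains_ratios:
  assumes "consistent a1 J" "a1 \<ge> 2" "\<And>i j r. (i, j, r) \<in> J \<Longrightarrow> r \<ge> 1"
  obtains d :: "nat \<Rightarrow> real" where "\<And>t. d t > 0" "\<And>i j r. (i, j, r) \<in> J \<Longrightarrow> of_int r = d i / d j"
proof -
  obtain y :: "nat \<Rightarrow> real" where y: "\<And>i j r. (i, j, r) \<in> J \<Longrightarrow> y i - y j = ln (of_int r) / ln (of_int a1)"
    using assms(1) unfolding consistent_def by fast
  have ln_a1: "ln (of_int a1 :: real) > 0"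
    using assms(2) by simp
  have ratio: "of_int r = of_int a1 powr y i / of_int a1 powr y j" if p: "(i, j, r) \<in> J" for i j r
  proof -
    have "of_int a1 powr y i / of_int a1 powr y j = exp (ln (of_int r) / ln (of_int a1) * ln (of_int a1))"
      using assms(2) y[OF p] by (simp add: powr_def exp_diff[symmetric] algebra_simps)
    also have "\<dots> = of_int r"
      using ln_a1 assms(3)[OF p] by simp
    finally show ?thesis ..
  qed
  have "of_int a1 powr y t > 0" for t
    using assms(2) by simp
  then show thesis
    using that[of "\<lambda>t. of_int a1 powr y t"] ratio by blast
qed

lemma dim_unitv_normalA_eq_normalC:
  fixes d :: "nat \<Rightarrow> real"
  assumes nz: "\<And>t. d t \<noteq> 0" and ratio: "\<And>i j r. (i, j, r) \<in> J \<Longrightarrow> of_int r = d i / d j"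
  shows "fv.dim (unitv ` S \<union> normalA ` J) = fv.dim (unitv ` S \<union> normalC ` J)"
proof -
  \<comment> \<open>the diagonal rescaling \<open>x\<^sub>t \<mapsto> d\<^sub>t x\<^sub>t\<close> turns each \<open>normalA p\<close> into a multiple of \<open>normalC p\<close>\<close>
  define D where "D v = (\<lambda>t. d t * v t)" for v :: "nat \<Rightarrow> real"
  have D_unitv: "D (unitv k) = (\<lambda>t. d k * unitv k t)" for k
    by (auto simp: D_def unitv_apply)
  have D_normalA: "D (normalA p) = (\<lambda>t. d i * normalC p t)" if "p \<in> J" "p = (i, j, r)" for p i j r
    using that ratio[of i j r] nz[of j] by (auto simp: D_def unitv_apply field_simps fun_eq_iff)
  have "Vector_Spaces.linear (\<lambda>c v i. c * v i) (\<lambda>c v i. c * v i) D"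
    by (auto simp: Vector_Spaces.linear_iff D_def fun_eq_iff algebra_simps fv.vector_space_axioms)
  moreover have "inj D"
    using nz by (auto intro!: injI simp: D_def fun_eq_iff)
  ultimately have "fv.dim (unitv ` S \<union> normalA ` J) = fv.dim (D ` (unitv ` S \<union> normalA ` J))"
    by (simp add: fv_dim_image_inj)
  also have "\<dots> = fv.dim (unitv ` S \<union> normalC ` J)"
  proof (rule fv.span_eq_dim, rule fv_span_eq_mutual_multiples)
    fix v assume "v \<in> D ` (unitv ` S \<union> normalA ` J)"
    then consider k where "k \<in> S" "v = D (unitv k)" | i j r where "(i, j, r) \<in> J" "v = D (normalA (i, j, r))"
      by auto
    then show "\<exists>c. \<exists>w\<in>unitv ` S \<union> normalC ` J. v = (\<lambda>t. c * w t)"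
    proof cases
      case 1
      then show ?thesis
        by (intro exI[of _ "d k"] bexI[of _ "unitv k"]) (simp_all add: D_unitv)
    next
      case 2
      show ?thesis
      proof (intro exI[of _ "d i"] bexI[of _ "normalC (i, j, r)"])
        show "v = (\<lambda>t. d i * normalC (i, j, r) t)"
          unfolding 2(2) D_normalA[OF 2(1) refl] ..
      qed (use 2 in blast)
    qed
  next
    fix v assume "v \<in> unitv ` S \<union> normalC ` J"
    then consider k where "k \<in> S" "v = unitv k" | i j r where "(i, j, r) \<in> J" "v = normalC (i, j, r)"
      by auto
    then show "\<exists>c. \<exists>w\<in>D ` (unitv ` S \<union> normalA ` J). v = (\<lambda>t. c * w t)"
    proof cases
      case 1
      show ?thesis
      proof (intro exI[of _ "1 / d k"] bexI[of _ "D (unitv k)"])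
        show "v = (\<lambda>t. 1 / d k * D (unitv k) t)"
          using 1 nz[of k] by (simp add: D_unitv)
      qed (use 1 in blast)
    next
      case 2
      show ?thesis
      proof (intro exI[of _ "1 / d i"] bexI[of _ "D (normalA (i, j, r))"])
        show "v = (\<lambda>t. 1 / d i * D (normalA (i, j, r)) t)"
          unfolding 2(2) D_normalA[OF 2(1) refl] using nz[of i] by simp
      qed (use 2 in blast)
    qed
  qed
  finally show ?thesis .
qed

lemma sum_Pow_unitv_consistent:
  fixes x :: "'a::comm_ring_1"
  assumes a: "\<forall>r\<in>a. r \<ge> 2" and a1: "a1 \<ge> 2" and J: "J \<subseteq> hyp_index n a" "finite J"
    and cons: "consistent a1 J"
  shows "(\<Sum>S\<in>Pow {..<n}. (-1) ^ card S * x ^ (n - fv.dim (unitv ` S \<union> normalA ` J)))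
       = (x - 1) ^ (n - fv.dim (normalC ` J))"
proof -
  have mem: "i < n" "j < n" "r \<ge> 1" if "(i, j, r) \<in> J" for i j r
    using hyp_index_memD[of i j r n a] that J(1) a by auto
  obtain d :: "nat \<Rightarrow> real" where d: "\<And>t. d t > 0" "\<And>i j r. (i, j, r) \<in> J \<Longrightarrow> of_int r = d i / d j"
    using consistent_obtains_ratios[OF cons a1] mem(3) by blast
  have nz: "d t \<noteq> 0" for t
    using d(1)[of t] by simp
  interpret coordinate_differences n "normalC ` J"
  proof
    fix g assume "g \<in> normalC ` J"
    then obtain i j r where "(i, j, r) \<in> J" "g = normalC (i, j, r)" by auto
    then have "i < n" "j < n" "g = unitv i - unitv j"
      using mem by (auto simp: fun_diff_def)
    then show "\<exists>i<n. \<exists>j<n. g = unitv i - unitv j"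
      by blast
  qed (use J(2) in simp)
  have "n - fv.dim (unitv ` S \<union> normalA ` J) = card (component ` {..<n}) - card (component ` S)"
    if "S \<in> Pow {..<n}" for S
  proof -
    have "fv.dim (unitv ` S \<union> normalA ` J) = fv.dim (normalC ` J) + card (component ` S)"
      using dim_unitv_normalA_eq_normalC[of d J S, OF nz d(2)] dim_Un_unitv[of S] that
      by (simp add: Un_commute)
    then show ?thesis
      using dim_add_card_components by linarith
  qed
  then have "(\<Sum>S\<in>Pow {..<n}. (-1) ^ card S * x ^ (n - fv.dim (unitv ` S \<union> normalA ` J)))
      = (\<Sum>S\<in>Pow {..<n}. (-1) ^ card S * x ^ (card (component ` {..<n}) - card (component ` S)))"
    by simp
  also have "\<dots> = (x - 1) ^ card (component ` {..<n})"
    by (rule sum_Pow_sign_power_card_image) simp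
  also have "card (component ` {..<n}) = n - fv.dim (normalC ` J)"
    using dim_add_card_components by linarith
  finally show ?thesis .
qed

definition solutionsA :: "(nat \<times> nat \<times> int) set \<Rightarrow> (nat \<Rightarrow> real) set" where
  "solutionsA J = {x. \<forall>i j r. (i, j, r) \<in> J \<longrightarrow> x i = of_int r * x j}"

lemma fv_subspace_solutionsA: "fv.subspace (solutionsA J)"
proof -
  have "x + y \<in> solutionsA J" if "x \<in> solutionsA J" "y \<in> solutionsA J" for x y
    using that unfolding solutionsA_def by (simp add: distrib_left)
  moreover have "(\<lambda>t. c * x t) \<in> solutionsA J" if "x \<in> solutionsA J" for c x
    using that unfolding solutionsA_def by (simp add: mult.left_commute)
  ultimately show ?thesis
    unfolding fv.subspace_def by (auto simp: solutionsA_def)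
qed

lemma solutionsA_nonzero_at:
  assumes "unitv k \<notin> fv.span (normalA ` J)"
  shows "\<exists>x\<in>solutionsA J. x k \<noteq> 0"
proof -
  obtain \<phi> where lin: "Vector_Spaces.linear (\<lambda>c v i. c * v i) (*) \<phi>"
    and "\<phi> (unitv k) = 1" and \<phi>0: "\<And>v. v \<in> normalA ` J \<Longrightarrow> \<phi> v = 0"
    using fv_linear_functional_exists[OF assms] by metis
  interpret \<phi>: Vector_Spaces.linear "\<lambda>(c::real) (v::nat \<Rightarrow> real) i. c * v i" "(*) :: real \<Rightarrow> _" \<phi>
    by (fact lin)
  have sol: "\<phi> (unitv i) = of_int r * \<phi> (unitv j)" if "(i, j, r) \<in> J" for i j r
  proof -
    have "normalA (i, j, r) = unitv i - (\<lambda>t. of_int r * unitv j t)"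
      by (simp add: fun_diff_def)
    then have "\<phi> (normalA (i, j, r)) = \<phi> (unitv i) - of_int r * \<phi> (unitv j)"
      by (simp add: \<phi>.diff \<phi>.scale)
    then show ?thesis
      using \<phi>0[OF imageI[OF that]] by simp
  qed
  then have "(\<lambda>t. \<phi> (unitv t)) \<in> solutionsA J"
    unfolding solutionsA_def mem_Collect_eq by (intro allI impI sol)
  then show ?thesis
    using \<open>\<phi> (unitv k) = 1\<close> by (intro bexI[of _ "\<lambda>t. \<phi> (unitv t)"]) simp_all
qed

lemma inconsistent_unitv_in_span_normalA:
  assumes a: "\<forall>r\<in>a. r \<ge> 2" and J: "J \<subseteq> hyp_index n a" and incons: "\<not> consistent a1 J"
  shows "\<exists>k<n. unitv k \<in> fv.span (normalA ` J)"
proof (rule ccontr)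
  assume "\<not> (\<exists>k<n. unitv k \<in> fv.span (normalA ` J))"
  then obtain x where x: "x \<in> solutionsA J" "\<And>k. k < n \<Longrightarrow> x k \<noteq> 0"
    using fv_subspace_nowhere_zero[OF fv_subspace_solutionsA] solutionsA_nonzero_at by metis
  \<comment> \<open>taking logarithms turns a nowhere vanishing solution of the \<open>A\<close>-system into a point of the \<open>C\<close>-system\<close>
  have "ln \<bar>x i\<bar> / ln (of_int a1) - ln \<bar>x j\<bar> / ln (of_int a1) = ln (of_int r) / ln (of_int a1)"
    if p: "(i, j, r) \<in> J" for i j r
  proof -
    have "i < n" "j < n" "r \<ge> 1"
      using hyp_index_memD[of i j r n a] p J a by auto
    moreover have "\<bar>x i\<bar> = of_int r * \<bar>x j\<bar>"
      using x(1) p \<open>r \<ge> 1\<close> by (simp add: solutionsA_def abs_mult)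
    ultimately show ?thesis
      using x(2) by (simp add: ln_mult diff_divide_distrib[symmetric])
  qed
  then have "consistent a1 J"
    unfolding consistent_def by fast
  with incons show False ..
qed

lemma sum_Pow_unitv_inconsistent:
  fixes x :: "'a::comm_ring_1"
  assumes a: "\<forall>r\<in>a. r \<ge> 2" and J: "J \<subseteq> hyp_index n a" "finite J" and incons: "\<not> consistent a1 J"
  shows "(\<Sum>S\<in>Pow {..<n}. (-1) ^ card S * x ^ (n - fv.dim (unitv ` S \<union> normalA ` J))) = 0"
proof -
  obtain k where k: "k < n" "unitv k \<in> fv.span (normalA ` J)"
    using inconsistent_unitv_in_span_normalA[OF a J(1) incons] by blast
  show ?thesis
  proof (rule sum_Pow_sign_cancel)
    fix S :: "nat set" assume "S \<subseteq> {..<n}"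
    then have "finite (unitv ` S \<union> normalA ` J)"
      using J(2) finite_subset by blast
    moreover have "unitv k \<in> fv.span (unitv ` S \<union> normalA ` J)"
      using k(2) fv.span_mono[of "normalA ` J" "unitv ` S \<union> normalA ` J"] by blast
    ultimately have "fv.dim (unitv ` insert k S \<union> normalA ` J) = fv.dim (unitv ` S \<union> normalA ` J)"
      using fv_dim_insert by simp
    then show "x ^ (n - fv.dim (unitv ` insert k S \<union> normalA ` J)) = x ^ (n - fv.dim (unitv ` S \<union> normalA ` J))"
      by simp
  qed (use k(1) in auto)
qed

section \<open>Characteristic polynomials\<close>

definition char_poly_at :: "nat \<Rightarrow> hyperplane set \<Rightarrow> 'a::comm_ring_1 \<Rightarrow> 'a" where
  "char_poly_at n A x =
     (\<Sum>B \<in> {B. B \<subseteq> A \<and> (\<Inter>H\<in>B. hyp_set n H) \<noteq> {}}. (-1) ^ card B * x ^ (n - arr_rank B))"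

lemma pcompose_char_poly: "pcompose (char_poly n A) q = char_poly_at n A q"
proof -
  have "pcompose (monom 1 k) q = q ^ k" for k
    by (induction k) (simp_all add: monom_Suc pcompose_pCons pcompose_1)
  moreover have "smult ((-1) ^ k) p = (-1) ^ k * p" for k and p :: "real poly"
    by (induction k) simp_all
  ultimately show ?thesis
    unfolding char_poly_def char_poly_at_def pcompose_sum pcompose_smult by simp
qed

lemma central_subsets_arrA: "{B. B \<subseteq> arrA n a \<and> (\<Inter>H\<in>B. hyp_set n H) \<noteq> {}} = Pow (arrA n a)"
proof -
  have "(\<lambda>_. 0) \<in> hyp_set n H" if "H \<in> arrA n a" for H
    using that by (auto simp: arrA_eq hyp_set_def)
  then show ?thesis
    by blast
qed

lemma central_subsets_arrC:
  assumes "\<forall>r\<in>a. r \<ge> 2"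
  shows "{B. B \<subseteq> arrC n a a1 \<and> (\<Inter>H\<in>B. hyp_set n H) \<noteq> {}}
       = image (\<lambda>p. (normalC p, offsetC a1 p)) ` {J \<in> Pow (hyp_index n a). consistent a1 J}"
    (is "_ = image ?f ` _")
proof (intro equalityI subsetI)
  have ne: "(\<Inter>H\<in>?f ` J. hyp_set n H) \<noteq> {} \<longleftrightarrow> consistent a1 J" if "J \<subseteq> hyp_index n a" for J
    using Inter_arrC_nonempty_iff[OF assms that] by simp
  {
    fix B assume "B \<in> {B. B \<subseteq> arrC n a a1 \<and> (\<Inter>H\<in>B. hyp_set n H) \<noteq> {}}"
    then have B: "B \<subseteq> ?f ` hyp_index n a" "(\<Inter>H\<in>B. hyp_set n H) \<noteq> {}"
      unfolding arrC_eq by auto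
    define J where "J = {p \<in> hyp_index n a. ?f p \<in> B}"
    have "B = ?f ` J" "J \<subseteq> hyp_index n a"
      using B(1) by (auto simp: J_def)
    then show "B \<in> image ?f ` {J \<in> Pow (hyp_index n a). consistent a1 J}"
      using ne B(2) by auto
  next
    fix B assume "B \<in> image ?f ` {J \<in> Pow (hyp_index n a). consistent a1 J}"
    then obtain J where "J \<subseteq> hyp_index n a" "consistent a1 J" "B = ?f ` J"
      by blast
    then show "B \<in> {B. B \<subseteq> arrC n a a1 \<and> (\<Inter>H\<in>B. hyp_set n H) \<noteq> {}}"
      using ne unfolding arrC_eq by auto
  }
qed

lemma char_poly_at_arrA:
  fixes x :: "'a::comm_ring_1"
  assumes a: "finite a" "\<forall>r\<in>a. r \<ge> 2"
  shows "char_poly_at n (arrA n a) x = (\<Sum>J\<in>Pow (hyp_index n a). (-1) ^ card J *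
           (\<Sum>S\<in>Pow {..<n}. (-1) ^ card S * x ^ (n - fv.dim (unitv ` S \<union> normalA ` J))))"
proof -
  define I where "I = hyp_index n a"
  define coord where "coord = (\<lambda>i. (unitv i, 0 :: real))"
  define fA where "fA = (\<lambda>p. (normalA p, 0 :: real))"
  define F where "F B = (-1) ^ card B * x ^ (n - arr_rank B)" for B
  have fin: "finite I" "finite {..<n}"
    using finite_hyp_index[OF a(1)] by (simp_all add: I_def)
  have arr: "arrA n a = coord ` {..<n} \<union> fA ` I"
    unfolding arrA_eq coord_def fA_def I_def ..
  have inj_coord: "inj_on coord {..<n}"
    by (rule inj_onI) (auto simp: coord_def unitv_def fun_eq_iff split: if_splits)
  have inj_fA: "inj_on fA I"
    using inj_on_normalA[OF a(2)] by (auto simp: inj_on_def fA_def I_def)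
  have disj: "coord ` {..<n} \<inter> fA ` I = {}"
    using unitv_neq_normalA[OF _ a(2)] by (auto simp: coord_def fA_def I_def)
  have "char_poly_at n (arrA n a) x = (\<Sum>S\<in>Pow {..<n}. \<Sum>J\<in>Pow I. F (coord ` S \<union> fA ` J))"
    unfolding char_poly_at_def central_subsets_arrA F_def[symmetric] unfolding arr
    using fin disj by (simp add: sum_Pow_Un_disjoint sum_Pow_image inj_coord inj_fA)
  also have "\<dots> = (\<Sum>S\<in>Pow {..<n}. \<Sum>J\<in>Pow I. (-1) ^ card J *
                 ((-1) ^ card S * x ^ (n - fv.dim (unitv ` S \<union> normalA ` J))))"
  proof (intro sum.cong refl)
    fix S J assume S: "S \<in> Pow {..<n}" and J: "J \<in> Pow I"
    have "card (coord ` S \<union> fA ` J) = card S + card J"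
      using S J fin disj inj_on_subset[OF inj_coord] inj_on_subset[OF inj_fA]
      by (subst card_Un_disjoint) (auto simp: card_image intro: finite_subset)
    moreover have "arr_rank (coord ` S \<union> fA ` J) = fv.dim (unitv ` S \<union> normalA ` J)"
      unfolding arr_rank_def image_Un image_image coord_def fA_def by simp
    ultimately show "F (coord ` S \<union> fA ` J) = (-1) ^ card J *
        ((-1) ^ card S * x ^ (n - fv.dim (unitv ` S \<union> normalA ` J)))"
      by (simp add: F_def power_add mult_ac)
  qed
  also have "\<dots> = (\<Sum>J\<in>Pow I. (-1) ^ card J *
           (\<Sum>S\<in>Pow {..<n}. (-1) ^ card S * x ^ (n - fv.dim (unitv ` S \<union> normalA ` J))))"
    by (subst sum.swap) (simp add: sum_distrib_left)
  finally show ?thesis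
    unfolding I_def .
qed

lemma char_poly_at_arrC:
  fixes y :: "'a::comm_ring_1"
  assumes a: "finite a" "\<forall>r\<in>a. r \<ge> 2" and a1: "a1 \<ge> 2"
  shows "char_poly_at n (arrC n a a1) y = (\<Sum>J\<in>Pow (hyp_index n a).
           if consistent a1 J then (-1) ^ card J * y ^ (n - fv.dim (normalC ` J)) else 0)"
proof -
  define I where "I = hyp_index n a"
  define fC where "fC = (\<lambda>p. (normalC p, offsetC a1 p))"
  have fin: "finite I"
    using finite_hyp_index[OF a(1)] by (simp add: I_def)
  have arr: "arrC n a a1 = fC ` I"
    unfolding arrC_eq fC_def I_def ..
  have inj_fC: "inj_on fC I"
    using inj_on_normalC_offsetC[OF a(2) a1] by (simp add: fC_def I_def)
  have "{B. B \<subseteq> arrC n a a1 \<and> (\<Inter>H\<in>B. hyp_set n H) \<noteq> {}} = image fC ` {J \<in> Pow I. consistent a1 J}"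
    unfolding fC_def I_def by (rule central_subsets_arrC[OF a(2)])
  moreover have "inj_on (image fC) {J \<in> Pow I. consistent a1 J}"
    by (rule inj_on_subset[OF inj_on_image_Pow[OF inj_fC]]) auto
  moreover have "card (fC ` J) = card J" "arr_rank (fC ` J) = fv.dim (normalC ` J)" if "J \<subseteq> I" for J
    using inj_on_subset[OF inj_fC that] by (simp_all add: card_image arr_rank_def image_image fC_def)
  ultimately have "char_poly_at n (arrC n a a1) y
      = (\<Sum>J\<in>{J \<in> Pow I. consistent a1 J}. (-1) ^ card J * y ^ (n - fv.dim (normalC ` J)))"
    unfolding char_poly_at_def by (simp add: sum.reindex)
  also have "\<dots> = (\<Sum>J\<in>Pow I. if consistent a1 J then (-1) ^ card J * y ^ (n - fv.dim (normalC ` J)) else 0)"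
    by (rule sum.inter_filter) (use fin in simp)
  finally show ?thesis
    unfolding I_def .
qed

lemma char_poly_at_arrA_arrC:
  fixes x :: "'a::comm_ring_1"
  assumes a: "finite a" "\<forall>r\<in>a. r \<ge> 2" and a1: "a1 \<ge> 2"
  shows "char_poly_at n (arrA n a) x = char_poly_at n (arrC n a a1) (x - 1)"
  unfolding char_poly_at_arrA[OF a] char_poly_at_arrC[OF a a1]
proof (rule sum.cong[OF refl])
  fix J assume "J \<in> Pow (hyp_index n a)"
  then have J: "J \<subseteq> hyp_index n a" "finite J"
    using finite_hyp_index[OF a(1)] finite_subset by auto
  show "(-1) ^ card J * (\<Sum>S\<in>Pow {..<n}. (-1) ^ card S * x ^ (n - fv.dim (unitv ` S \<union> normalA ` J)))
      = (if consistent a1 J then (-1) ^ card J * (x - 1) ^ (n - fv.dim (normalC ` J)) else 0)"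
    by (cases "consistent a1 J")
      (simp_all add: sum_Pow_unitv_consistent[OF a(2) a1 J] sum_Pow_unitv_inconsistent[OF a(2) J])
qed

theorem theorem4p1:
  fixes a :: "int set" and a1 :: int and n :: nat
  assumes "finite a" and "\<forall>r\<in>a. r \<ge> 2" and "a1 \<in> a"
  shows "char_poly n (arrA n a) = pcompose (char_poly n (arrC n a a1)) [:-1, 1:]"
proof -
  have "char_poly n (arrA n a) = char_poly_at n (arrA n a) [:0, 1:]"
    using pcompose_char_poly[of n "arrA n a" "[:0, 1:]"] by simp
  also have "\<dots> = char_poly_at n (arrC n a a1) ([:0, 1:] - 1)"
    using assms by (intro char_poly_at_arrA_arrC) auto
  also have "[:0, 1:] - 1 = [:-1, 1 :: real:]"
    by (simp add: one_pCons)
  finally show ?thesis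
    by (simp add: pcompose_char_poly)
qed

end
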